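(* Let $m \geq 2$ be an integer and let $p \in \left(\frac{1}{m}, 1\right)$. Then $$\mathbb{P}_{X \sim B(m,p)}\big[X \geq mp\big] \;\geq\; 1 - \max_{k \in \{1, \ldots, m-1\}} \mathbb{P}_{X \sim B(m,\frac{k}{m})}\big[X \leq k\big].$$
   Context: $B(m,p)$ denotes the binomial distribution with $m$ trials and success probability $p$: $\mathbb{P}[X=j]=\binom{m}{j}p^j(1-p)^{m-j}$ for $j=0,\dots,m$; its mean is $mp$. *)

theory Defs
  imports "HOL-Probability.Probability"
begin

end

theory Submission imports Defs begin

text \<open>With \<open>k\<close> the largest integer below \<open>mp\<close>, the event \<open>X \<ge> mp\<close> is the complement of
  \<open>X \<le> k\<close>, and \<open>k/m \<le> p\<close> lies among the success probabilities \<open>1/m, \<dots>, (m-1)/m\<close>.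
  The binomial law is stochastically increasing in its success probability, so
  \<open>P[B(m,p) \<le> k] \<le> P[B(m,k/m) \<le> k]\<close>, which is bounded by the maximum.\<close>

lemma prob_binomial_pmf_Suc:
  assumes "p \<in> {0..1}"
  shows "measure_pmf.prob (binomial_pmf (Suc n) p) A =
           p * measure_pmf.prob (binomial_pmf n p) (Suc -` A)
         + (1 - p) * measure_pmf.prob (binomial_pmf n p) A"
proof -
  have shift: "(+) (Suc 0) -` A = Suc -` A" "(+) (0::nat) -` A = A" by auto
  have "ennreal (measure_pmf.prob (binomial_pmf (Suc n) p) A)
          = ennreal (measure_pmf.prob (binomial_pmf n p) (Suc -` A)) * p
          + ennreal (measure_pmf.prob (binomial_pmf n p) A) * (1 - p)"
    using assms
    by (simp add: binomial_pmf_Suc map_pmf_def[symmetric] emeasure_bind_pmf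
        nn_integral_bernoulli_pmf measure_pmf.emeasure_eq_measure[symmetric] shift)
  also have "\<dots> = ennreal (p * measure_pmf.prob (binomial_pmf n p) (Suc -` A)
                          + (1 - p) * measure_pmf.prob (binomial_pmf n p) A)"
    using assms by (simp add: ennreal_plus[symmetric] ennreal_mult[symmetric] mult.commute
        del: ennreal_plus)
  finally show ?thesis
    using assms by (subst (asm) ennreal_inj) auto
qed

lemma prob_binomial_pmf_atMost_antimono:
  assumes "0 \<le> q" "q \<le> p" "p \<le> 1"
  shows "measure_pmf.prob (binomial_pmf n p) {..k} \<le> measure_pmf.prob (binomial_pmf n q) {..k}"
  using assms
proof (induction n arbitrary: k)
  case 0
  then show ?case by (simp add: binomial_pmf_0)
next
  case (Suc n)
  define a where "a r = measure_pmf.prob (binomial_pmf n r) (Suc -` {..k})" for r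
  define b where "b r = measure_pmf.prob (binomial_pmf n r) {..k}" for r
  have "a p \<le> a q"
  proof (cases k)
    case 0
    then have "Suc -` {..k} = {}" by auto
    then show ?thesis by (simp add: a_def)
  next
    case (Suc j)
    then have "Suc -` {..k} = {..j}" by auto
    then show ?thesis using Suc.IH[of j] Suc.prems by (simp add: a_def)
  qed
  moreover have "b p \<le> b q"
    using Suc.IH[of k] Suc.prems by (simp add: b_def)
  moreover have "a q \<le> b q"
    unfolding a_def b_def by (rule measure_pmf.finite_measure_mono) auto
  ultimately have "p * a p + (1 - p) * b p \<le> p * a q + (1 - p) * b q"
    using Suc.prems by (intro add_mono mult_left_mono) auto
  also have "\<dots> \<le> q * a q + (1 - q) * b q"
    \<comment> \<open>lowering the weight on \<open>a q\<close> shifts mass \<open>p - q\<close> to the larger term \<open>b q\<close>\<close>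
    using \<open>a q \<le> b q\<close> \<open>q \<le> p\<close> mult_right_mono[of q p "b q - a q"]
    by (simp add: algebra_simps)
  finally show ?case
    using Suc.prems by (simp add: prob_binomial_pmf_Suc a_def b_def)
qed

lemma of_nat_less_iff_less_nat_ceiling: "real x < t \<longleftrightarrow> x < nat \<lceil>t\<rceil>"
  using less_ceiling_iff[of "int x" t] by linarith

theorem corollary1:
  fixes m :: nat and p :: real
  assumes "m \<ge> 2" and "1 / real m < p" and "p < 1"
  shows "measure_pmf.prob (binomial_pmf m p) {x. real x \<ge> real m * p}
         \<ge> 1 - Max ((\<lambda>k. measure_pmf.prob (binomial_pmf m (real k / real m)) {x. x \<le> k}) ` {1..m-1})"
proof -
  let ?B = "\<lambda>r. measure_pmf.prob (binomial_pmf m r)"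
  define k where "k = nat \<lceil>real m * p\<rceil> - 1"
  have mp: "1 < real m * p" "real m * p < real m"
    using assms by (simp_all add: field_simps)
  then have below: "real x < real m * p \<longleftrightarrow> x \<le> k" for x
    unfolding k_def of_nat_less_iff_less_nat_ceiling by linarith
  have "real k < real m * p"
    using below by simp
  then have "1 \<le> k" "k < m"
    using below[of 1] mp by auto
  then have "k \<in> {1..m-1}" by simp
  have "real k / real m \<le> p"
    using \<open>real k < real m * p\<close> assms(1) by (simp add: field_simps)
  have "{x. real x \<ge> real m * p} = - {..k}"
    using below by (auto simp: not_less[symmetric])
  then have "?B p {x. real x \<ge> real m * p} = 1 - ?B p {..k}"
    using measure_pmf.prob_compl[of "{..k}"] by (simp add: Compl_eq_Diff_UNIV)
  moreover have "?B p {..k} \<le> ?B (real k / real m) {..k}"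
    using \<open>real k / real m \<le> p\<close> assms(3)
    by (intro prob_binomial_pmf_atMost_antimono) auto
  moreover have "?B (real k / real m) {..k} \<le> Max ((\<lambda>k. ?B (real k / real m) {x. x \<le> k}) ` {1..m-1})"
    using \<open>k \<in> {1..m-1}\<close> by (intro Max_ge) (auto simp: atMost_def)
  ultimately show ?thesis by linarith
qed

end
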